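(* Let $(\mathscr{C},\mathbb{E},\mathfrak{s})$ be an extriangulated category such that for every object $C$ the morphism $C\to 0$ is an $\mathbb{E}$-inflation and $0\to C$ is an $\mathbb{E}$-deflation, and let $\Sigma$ and $\mathbf{E}^1(-,-)=\mathscr{C}(-,\Sigma -)$ be as in the context. Let $A$ be an object and $f\colon X\to Y$ a morphism of $\mathscr{C}$. Then $\mathbf{E}^1(A,f)\cong\mathbb{E}(A,f)$ and $\mathbf{E}^1(f,A)\cong\mathbb{E}(f,A)$ as objects of the morphism category $\mathrm{Mor}(Ab)$ (here $\mathbf{E}^1(A,f)\colon\mathscr{C}(A,\Sigma X)\to\mathscr{C}(A,\Sigma Y)$ is $\varepsilon\mapsto\Sigma f\circ\varepsilon$ and $\mathbf{E}^1(f,A)\colon\mathscr{C}(Y,\Sigma A)\to\mathscr{C}(X,\Sigma A)$ is $\varepsilon\mapsto\varepsilon\circ f$).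
   Context: An extriangulated category $(\mathscr{C},\mathbb{E},\mathfrak{s})$ is in the sense of Nakaoka–Palu: $\mathscr{C}$ additive, $\mathbb{E}\colon\mathscr{C}^{\mathrm{op}}\times\mathscr{C}\to Ab$ biadditive, $\mathfrak{s}$ an additive realisation assigning to $\delta\in\mathbb{E}(C,A)$ an equivalence class of sequences $[A\to B\to C]$, satisfying (ET1)–(ET4)$^{\mathrm{op}}$. For $a\colon A\to A'$ and $c\colon C'\to C$ write $a_*\delta=\mathbb{E}(C,a)(\delta)$ and $c^*\delta=\mathbb{E}(c,A)(\delta)$; $\mathbb{E}(c,A)$ denotes $\mathbb{E}(c^{\mathrm{op}},A)$. A morphism $x\colon A\to B$ is an $\mathbb{E}$-inflation if $\mathfrak{s}(\delta)=[A\xrightarrow{x}B\to C]$ for some $\delta\in\mathbb{E}(C,A)$; dually for $\mathbb{E}$-deflations. For each object $Y$, $\Sigma Y$ is a chosen object with $\delta_Y\in\mathbb{E}(\Sigma Y,Y)$ such that $\mathfrak{s}(\delta_Y)=[Y\to 0\to\Sigma Y]$; for $f\colon X\to Y$, $\Sigma f$ is the unique morphism $\Sigma X\to\Sigma Y$ with $f_*\delta_X=(\Sigma f)^*\delta_Y$. $\mathrm{Mor}(Ab)$ is the category whose objects are homomorphisms of abelian groups and whose morphisms are commutative squares. *)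

theory Defs
  imports "HOL-Algebra.Group"
begin

text \<open>
  Objects of type 'o, morphisms of type 'm, extension elements of type 'e.
  cmp g f is the composite g o f.  eact c a d is E(c,a)(d): for c : C' -> C,
  a : A -> A' and d in E(C,A) it lies in E(C',A').
  rlz C A d x y means that the sequence A -x-> B -y-> C belongs to the
  equivalence class s(d), for d in E(C,A).
\<close>

record ('o, 'm, 'e) extri =
  ob    :: "'o set"
  arr   :: "'m set"
  src   :: "'m \<Rightarrow> 'o"
  tgt   :: "'m \<Rightarrow> 'o"
  cmp   :: "'m \<Rightarrow> 'm \<Rightarrow> 'm"
  idm   :: "'o \<Rightarrow> 'm"
  madd  :: "'m \<Rightarrow> 'm \<Rightarrow> 'm"
  mzero :: "'o \<Rightarrow> 'o \<Rightarrow> 'm"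
  ext   :: "'o \<Rightarrow> 'o \<Rightarrow> 'e set"
  eadd  :: "'e \<Rightarrow> 'e \<Rightarrow> 'e"
  ezero :: "'o \<Rightarrow> 'o \<Rightarrow> 'e"
  eact  :: "'m \<Rightarrow> 'm \<Rightarrow> 'e \<Rightarrow> 'e"
  rlz   :: "'o \<Rightarrow> 'o \<Rightarrow> 'e \<Rightarrow> 'm \<Rightarrow> 'm \<Rightarrow> bool"

definition Hom :: "('o,'m,'e) extri \<Rightarrow> 'o \<Rightarrow> 'o \<Rightarrow> 'm set" where
  "Hom K X Y = {f \<in> arr K. src K f = X \<and> tgt K f = Y}"

definition homgrp :: "('o,'m,'e) extri \<Rightarrow> 'o \<Rightarrow> 'o \<Rightarrow> 'm monoid" where
  "homgrp K X Y = \<lparr>carrier = Hom K X Y, mult = madd K, one = mzero K X Y\<rparr>"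

definition extgrp :: "('o,'m,'e) extri \<Rightarrow> 'o \<Rightarrow> 'o \<Rightarrow> 'e monoid" where
  "extgrp K C A = \<lparr>carrier = ext K C A, mult = eadd K, one = ezero K C A\<rparr>"

text \<open>a_* d = E(C,a)(d) for d in E(C,A);  c^* d = E(c,A)(d) for d in E(C,A).\<close>
definition ext_push :: "('o,'m,'e) extri \<Rightarrow> 'o \<Rightarrow> 'm \<Rightarrow> 'e \<Rightarrow> 'e" where
  "ext_push K C a d = eact K (idm K C) a d"

definition ext_pull :: "('o,'m,'e) extri \<Rightarrow> 'o \<Rightarrow> 'm \<Rightarrow> 'e \<Rightarrow> 'e" where
  "ext_pull K A c d = eact K c (idm K A) d"

definition is_category :: "('o,'m,'e) extri \<Rightarrow> bool" where
  "is_category K \<longleftrightarrow>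
     (\<forall>f\<in>arr K. src K f \<in> ob K \<and> tgt K f \<in> ob K) \<and>
     (\<forall>X\<in>ob K. idm K X \<in> Hom K X X) \<and>
     (\<forall>X Y Z f g. f \<in> Hom K X Y \<longrightarrow> g \<in> Hom K Y Z \<longrightarrow> cmp K g f \<in> Hom K X Z) \<and>
     (\<forall>W X Y Z f g h. f \<in> Hom K W X \<longrightarrow> g \<in> Hom K X Y \<longrightarrow> h \<in> Hom K Y Z \<longrightarrow>
        cmp K h (cmp K g f) = cmp K (cmp K h g) f) \<and>
     (\<forall>X Y f. f \<in> Hom K X Y \<longrightarrow> cmp K f (idm K X) = f \<and> cmp K (idm K Y) f = f)"

definition is_preadditive :: "('o,'m,'e) extri \<Rightarrow> bool" where
  "is_preadditive K \<longleftrightarrow> is_category K \<and>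
     (\<forall>X\<in>ob K. \<forall>Y\<in>ob K. comm_group (homgrp K X Y)) \<and>
     (\<forall>X Y Z f f' g. f \<in> Hom K X Y \<longrightarrow> f' \<in> Hom K X Y \<longrightarrow> g \<in> Hom K Y Z \<longrightarrow>
        cmp K g (madd K f f') = madd K (cmp K g f) (cmp K g f')) \<and>
     (\<forall>X Y Z f g g'. f \<in> Hom K X Y \<longrightarrow> g \<in> Hom K Y Z \<longrightarrow> g' \<in> Hom K Y Z \<longrightarrow>
        cmp K (madd K g g') f = madd K (cmp K g f) (cmp K g' f))"

definition zero_obj :: "('o,'m,'e) extri \<Rightarrow> 'o \<Rightarrow> bool" where
  "zero_obj K Z \<longleftrightarrow> Z \<in> ob K \<and> idm K Z = mzero K Z Z"

definition is_biprod :: "('o,'m,'e) extri \<Rightarrow> 'o \<Rightarrow> 'o \<Rightarrow> 'o \<Rightarrow> 'm \<Rightarrow> 'm \<Rightarrow> 'm \<Rightarrow> 'm \<Rightarrow> bool" where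
  "is_biprod K X Y S i1 i2 p1 p2 \<longleftrightarrow> S \<in> ob K \<and>
     i1 \<in> Hom K X S \<and> i2 \<in> Hom K Y S \<and> p1 \<in> Hom K S X \<and> p2 \<in> Hom K S Y \<and>
     cmp K p1 i1 = idm K X \<and> cmp K p2 i2 = idm K Y \<and>
     cmp K p1 i2 = mzero K Y X \<and> cmp K p2 i1 = mzero K X Y \<and>
     madd K (cmp K i1 p1) (cmp K i2 p2) = idm K S"

definition is_additive :: "('o,'m,'e) extri \<Rightarrow> bool" where
  "is_additive K \<longleftrightarrow> is_preadditive K \<and> (\<exists>Z. zero_obj K Z) \<and>
     (\<forall>X\<in>ob K. \<forall>Y\<in>ob K. \<exists>S i1 i2 p1 p2. is_biprod K X Y S i1 i2 p1 p2)"

definition ET1 :: "('o,'m,'e) extri \<Rightarrow> bool" where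
  "ET1 K \<longleftrightarrow>
     (\<forall>C\<in>ob K. \<forall>A\<in>ob K. comm_group (extgrp K C A)) \<and>
     (\<forall>C C' A A' c a d. c \<in> Hom K C' C \<longrightarrow> a \<in> Hom K A A' \<longrightarrow> d \<in> ext K C A \<longrightarrow>
        eact K c a d \<in> ext K C' A') \<and>
     (\<forall>C C' A A' c a d d'. c \<in> Hom K C' C \<longrightarrow> a \<in> Hom K A A' \<longrightarrow> d \<in> ext K C A \<longrightarrow>
        d' \<in> ext K C A \<longrightarrow> eact K c a (eadd K d d') = eadd K (eact K c a d) (eact K c a d')) \<and>
     (\<forall>C A d. C \<in> ob K \<longrightarrow> A \<in> ob K \<longrightarrow> d \<in> ext K C A \<longrightarrow> eact K (idm K C) (idm K A) d = d) \<and>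
     (\<forall>C C' C'' A A' A'' c c' a a' d. c \<in> Hom K C' C \<longrightarrow> c' \<in> Hom K C'' C' \<longrightarrow>
        a \<in> Hom K A A' \<longrightarrow> a' \<in> Hom K A' A'' \<longrightarrow> d \<in> ext K C A \<longrightarrow>
        eact K (cmp K c c') (cmp K a' a) d = eact K c' a' (eact K c a d)) \<and>
     (\<forall>C C' A A' c1 c2 a d. c1 \<in> Hom K C' C \<longrightarrow> c2 \<in> Hom K C' C \<longrightarrow> a \<in> Hom K A A' \<longrightarrow>
        d \<in> ext K C A \<longrightarrow> eact K (madd K c1 c2) a d = eadd K (eact K c1 a d) (eact K c2 a d)) \<and>
     (\<forall>C C' A A' c a1 a2 d. c \<in> Hom K C' C \<longrightarrow> a1 \<in> Hom K A A' \<longrightarrow> a2 \<in> Hom K A A' \<longrightarrow>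
        d \<in> ext K C A \<longrightarrow> eact K c (madd K a1 a2) d = eadd K (eact K c a1 d) (eact K c a2 d))"

definition is_iso :: "('o,'m,'e) extri \<Rightarrow> 'o \<Rightarrow> 'o \<Rightarrow> 'm \<Rightarrow> bool" where
  "is_iso K X Y b \<longleftrightarrow> b \<in> Hom K X Y \<and>
     (\<exists>b'\<in>Hom K Y X. cmp K b' b = idm K X \<and> cmp K b b' = idm K Y)"

definition seq_equiv :: "('o,'m,'e) extri \<Rightarrow> 'o \<Rightarrow> 'm \<Rightarrow> 'm \<Rightarrow> 'o \<Rightarrow> 'm \<Rightarrow> 'm \<Rightarrow> bool" where
  "seq_equiv K B x y B' x' y' \<longleftrightarrow>
     (\<exists>b. is_iso K B B' b \<and> cmp K b x = x' \<and> cmp K y' b = y)"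

definition ET2 :: "('o,'m,'e) extri \<Rightarrow> bool" where
  "ET2 K \<longleftrightarrow>
     (\<forall>C A d x y. rlz K C A d x y \<longrightarrow> C \<in> ob K \<and> A \<in> ob K \<and> d \<in> ext K C A \<and>
        (\<exists>B\<in>ob K. x \<in> Hom K A B \<and> y \<in> Hom K B C)) \<and>
     (\<forall>C\<in>ob K. \<forall>A\<in>ob K. \<forall>d\<in>ext K C A. \<exists>x y. rlz K C A d x y) \<and>
     (\<forall>C A B B' d x y x' y'. rlz K C A d x y \<longrightarrow> x \<in> Hom K A B \<longrightarrow> y \<in> Hom K B C \<longrightarrow>
        x' \<in> Hom K A B' \<longrightarrow> y' \<in> Hom K B' C \<longrightarrow>
        (rlz K C A d x' y' \<longleftrightarrow> seq_equiv K B x y B' x' y')) \<and>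
     (\<forall>C A B C' A' B' d d' x y x' y' a c.
        rlz K C A d x y \<longrightarrow> rlz K C' A' d' x' y' \<longrightarrow>
        x \<in> Hom K A B \<longrightarrow> y \<in> Hom K B C \<longrightarrow> x' \<in> Hom K A' B' \<longrightarrow> y' \<in> Hom K B' C' \<longrightarrow>
        a \<in> Hom K A A' \<longrightarrow> c \<in> Hom K C C' \<longrightarrow>
        ext_push K C a d = ext_pull K A' c d' \<longrightarrow>
        (\<exists>b\<in>Hom K B B'. cmp K b x = cmp K x' a \<and> cmp K y' b = cmp K c y)) \<and>
     (\<forall>C A S i1 i2 p1 p2. C \<in> ob K \<longrightarrow> A \<in> ob K \<longrightarrow> is_biprod K A C S i1 i2 p1 p2 \<longrightarrow>
        rlz K C A (ezero K C A) i1 p2) \<and>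
     (\<forall>C A B C' A' B' d d' x y x' y' SA iA1 iA2 pA1 pA2 SB iB1 iB2 pB1 pB2 SC iC1 iC2 pC1 pC2.
        rlz K C A d x y \<longrightarrow> rlz K C' A' d' x' y' \<longrightarrow>
        x \<in> Hom K A B \<longrightarrow> y \<in> Hom K B C \<longrightarrow> x' \<in> Hom K A' B' \<longrightarrow> y' \<in> Hom K B' C' \<longrightarrow>
        is_biprod K A A' SA iA1 iA2 pA1 pA2 \<longrightarrow>
        is_biprod K B B' SB iB1 iB2 pB1 pB2 \<longrightarrow>
        is_biprod K C C' SC iC1 iC2 pC1 pC2 \<longrightarrow>
        rlz K SC SA (eadd K (eact K pC1 iA1 d) (eact K pC2 iA2 d'))
          (madd K (cmp K iB1 (cmp K x pA1)) (cmp K iB2 (cmp K x' pA2)))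
          (madd K (cmp K iC1 (cmp K y pB1)) (cmp K iC2 (cmp K y' pB2))))"

definition ET3 :: "('o,'m,'e) extri \<Rightarrow> bool" where
  "ET3 K \<longleftrightarrow>
     (\<forall>C A B C' A' B' d d' x y x' y' a b.
        rlz K C A d x y \<longrightarrow> rlz K C' A' d' x' y' \<longrightarrow>
        x \<in> Hom K A B \<longrightarrow> y \<in> Hom K B C \<longrightarrow> x' \<in> Hom K A' B' \<longrightarrow> y' \<in> Hom K B' C' \<longrightarrow>
        a \<in> Hom K A A' \<longrightarrow> b \<in> Hom K B B' \<longrightarrow> cmp K b x = cmp K x' a \<longrightarrow>
        (\<exists>c\<in>Hom K C C'. cmp K c y = cmp K y' b \<and> ext_push K C a d = ext_pull K A' c d'))"

definition ET3op :: "('o,'m,'e) extri \<Rightarrow> bool" where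
  "ET3op K \<longleftrightarrow>
     (\<forall>C A B C' A' B' d d' x y x' y' b c.
        rlz K C A d x y \<longrightarrow> rlz K C' A' d' x' y' \<longrightarrow>
        x \<in> Hom K A B \<longrightarrow> y \<in> Hom K B C \<longrightarrow> x' \<in> Hom K A' B' \<longrightarrow> y' \<in> Hom K B' C' \<longrightarrow>
        b \<in> Hom K B B' \<longrightarrow> c \<in> Hom K C C' \<longrightarrow> cmp K y' b = cmp K c y \<longrightarrow>
        (\<exists>a\<in>Hom K A A'. cmp K x' a = cmp K b x \<and> ext_push K C a d = ext_pull K A' c d'))"

definition ET4 :: "('o,'m,'e) extri \<Rightarrow> bool" where
  "ET4 K \<longleftrightarrow>
     (\<forall>A B C D F d d' f f' g g'.
        rlz K D A d f f' \<longrightarrow> rlz K F B d' g g' \<longrightarrow>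
        f \<in> Hom K A B \<longrightarrow> f' \<in> Hom K B D \<longrightarrow> g \<in> Hom K B C \<longrightarrow> g' \<in> Hom K C F \<longrightarrow>
        (\<exists>E\<in>ob K. \<exists>h'\<in>Hom K C E. \<exists>dm\<in>Hom K D E. \<exists>e\<in>Hom K E F. \<exists>d''\<in>ext K E A.
           rlz K E A d'' (cmp K g f) h' \<and>
           cmp K h' g = cmp K dm f' \<and> cmp K e h' = g' \<and>
           rlz K F D (ext_push K F f' d') dm e \<and>
           ext_pull K A dm d'' = d \<and>
           ext_push K E f d'' = ext_pull K B e d'))"

definition ET4op :: "('o,'m,'e) extri \<Rightarrow> bool" where
  "ET4op K \<longleftrightarrow>
     (\<forall>A B C D F d d' f f' g g'.
        rlz K B D d f' f \<longrightarrow> rlz K C F d' g' g \<longrightarrow>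
        f' \<in> Hom K D A \<longrightarrow> f \<in> Hom K A B \<longrightarrow> g' \<in> Hom K F B \<longrightarrow> g \<in> Hom K B C \<longrightarrow>
        (\<exists>E\<in>ob K. \<exists>dm\<in>Hom K D E. \<exists>e\<in>Hom K E F. \<exists>h'\<in>Hom K E A. \<exists>d''\<in>ext K C E.
           rlz K C E d'' h' (cmp K g f) \<and>
           cmp K h' dm = f' \<and> cmp K f h' = cmp K g' e \<and>
           rlz K F D (ext_pull K D g' d) dm e \<and>
           ext_push K C e d'' = d' \<and>
           ext_push K B dm d = ext_pull K E g d''))"

definition extriangulated :: "('o,'m,'e) extri \<Rightarrow> bool" where
  "extriangulated K \<longleftrightarrow> is_additive K \<and> ET1 K \<and> ET2 K \<and> ET3 K \<and> ET3op K \<and> ET4 K \<and> ET4op K"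

definition is_inflation :: "('o,'m,'e) extri \<Rightarrow> 'm \<Rightarrow> bool" where
  "is_inflation K x \<longleftrightarrow> (\<exists>C A d y. d \<in> ext K C A \<and> rlz K C A d x y)"

definition is_deflation :: "('o,'m,'e) extri \<Rightarrow> 'm \<Rightarrow> bool" where
  "is_deflation K y \<longleftrightarrow> (\<exists>C A d x. d \<in> ext K C A \<and> rlz K C A d x y)"

definition Sigma_mor :: "('o,'m,'e) extri \<Rightarrow> ('o \<Rightarrow> 'o) \<Rightarrow> ('o \<Rightarrow> 'e) \<Rightarrow> 'm \<Rightarrow> 'm" where
  "Sigma_mor K Sig dl f =
     (THE g. g \<in> Hom K (Sig (src K f)) (Sig (tgt K f)) \<and>
        ext_push K (Sig (src K f)) f (dl (src K f)) = ext_pull K (tgt K f) g (dl (tgt K f)))"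

text \<open>Isomorphism in Mor(Ab) of objects phi : G1 -> G2 and psi : H1 -> H2.\<close>
definition morab_iso :: "('a, 'x) monoid_scheme \<Rightarrow> ('b, 'y) monoid_scheme \<Rightarrow> ('a \<Rightarrow> 'b)
     \<Rightarrow> ('c, 'z) monoid_scheme \<Rightarrow> ('d, 'w) monoid_scheme \<Rightarrow> ('c \<Rightarrow> 'd) \<Rightarrow> bool" where
  "morab_iso G1 G2 phi H1 H2 psi \<longleftrightarrow>
     phi \<in> hom G1 G2 \<and> psi \<in> hom H1 H2 \<and>
     (\<exists>\<alpha> \<beta>. \<alpha> \<in> iso G1 H1 \<and> \<beta> \<in> iso G2 H2 \<and>
        (\<forall>u\<in>carrier G1. psi (\<alpha> u) = \<beta> (phi u)))"

end

(* The realisation X \<rightarrow> 0 \<rightarrow> \<Sigma>X of \<delta>_X makes u \<mapsto> u^* \<delta>_X an isomorphism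
   C(B, \<Sigma>X) \<cong> E(B, X) for every object B. It is onto by (ET3), comparing a realisation of
   d \<in> E(B, X) with X \<rightarrow> 0 \<rightarrow> \<Sigma>X; it is injective because, by (ET2), u^* \<delta>_X = 0
   yields a morphism from the split conflation X \<rightarrow> X \<oplus> B \<rightarrow> B, so u composed with the
   projection onto B factors through 0. These isomorphisms intertwine E^1(A, f) with E(A, f),
   since f_* u^* \<delta>_X = u^* f_* \<delta>_X = u^* (\<Sigma>f)^* \<delta>_Y = (\<Sigma>f u)^* \<delta>_Y, and E^1(f, A)
   with E(f, A), since f^* u^* = (u f)^*. *)

theory Submission
  imports Defs "HOL-Algebra.Coset"
begin

lemma morab_isoI:
  assumes "\<phi> \<in> hom G1 G2" "\<psi> \<in> hom H1 H2" "\<alpha> \<in> iso G1 H1" "\<beta> \<in> iso G2 H2"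
    and "\<And>u. u \<in> carrier G1 \<Longrightarrow> \<psi> (\<alpha> u) = \<beta> (\<phi> u)"
  shows "morab_iso G1 G2 \<phi> H1 H2 \<psi>"
  using assms unfolding morab_iso_def by blast

locale extriangulated_category =
  fixes K :: "('o, 'm, 'e) extri"
  assumes extriangulated: "extriangulated K"
begin

lemma category: "is_category K"
  using extriangulated by (simp add: extriangulated_def is_additive_def is_preadditive_def)

lemma preadditive: "is_preadditive K"
  using extriangulated by (simp add: extriangulated_def is_additive_def)

lemma Hom_ob: "f \<in> Hom K X Y \<Longrightarrow> X \<in> ob K \<and> Y \<in> ob K"
  using category unfolding is_category_def Hom_def by blast

lemma cmp_Hom: "f \<in> Hom K X Y \<Longrightarrow> g \<in> Hom K Y Z \<Longrightarrow> cmp K g f \<in> Hom K X Z"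
  using category unfolding is_category_def by blast

lemma idm_Hom: "X \<in> ob K \<Longrightarrow> idm K X \<in> Hom K X X"
  using category unfolding is_category_def by blast

lemma cmp_assoc:
  "f \<in> Hom K W X \<Longrightarrow> g \<in> Hom K X Y \<Longrightarrow> h \<in> Hom K Y Z \<Longrightarrow>
    cmp K h (cmp K g f) = cmp K (cmp K h g) f"
  using category unfolding is_category_def by blast

lemma cmp_idm_right: "f \<in> Hom K X Y \<Longrightarrow> cmp K f (idm K X) = f"
  using category unfolding is_category_def by blast

lemma cmp_idm_left: "f \<in> Hom K X Y \<Longrightarrow> cmp K (idm K Y) f = f"
  using category unfolding is_category_def by blast

lemma comm_group_homgrp: "X \<in> ob K \<Longrightarrow> Y \<in> ob K \<Longrightarrow> comm_group (homgrp K X Y)"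
  using preadditive unfolding is_preadditive_def by blast

lemma cmp_madd_right:
  "f \<in> Hom K X Y \<Longrightarrow> f' \<in> Hom K X Y \<Longrightarrow> g \<in> Hom K Y Z \<Longrightarrow>
    cmp K g (madd K f f') = madd K (cmp K g f) (cmp K g f')"
  using preadditive unfolding is_preadditive_def by blast

lemma cmp_madd_left:
  "f \<in> Hom K X Y \<Longrightarrow> g \<in> Hom K Y Z \<Longrightarrow> g' \<in> Hom K Y Z \<Longrightarrow>
    cmp K (madd K g g') f = madd K (cmp K g f) (cmp K g' f)"
  using preadditive unfolding is_preadditive_def by blast

lemma biprod_ex: "X \<in> ob K \<Longrightarrow> Y \<in> ob K \<Longrightarrow> \<exists>S i1 i2 p1 p2. is_biprod K X Y S i1 i2 p1 p2"
  using extriangulated unfolding extriangulated_def is_additive_def by blast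

lemma ET1: "ET1 K"
  using extriangulated by (simp add: extriangulated_def)

lemma ET2: "ET2 K"
  using extriangulated by (simp add: extriangulated_def)

lemma ET3: "ET3 K"
  using extriangulated by (simp add: extriangulated_def)

lemma comm_group_extgrp: "C \<in> ob K \<Longrightarrow> A \<in> ob K \<Longrightarrow> comm_group (extgrp K C A)"
  using ET1 unfolding ET1_def by (elim conjE) blast

lemma eact_ext:
  "c \<in> Hom K C' C \<Longrightarrow> a \<in> Hom K A A' \<Longrightarrow> d \<in> ext K C A \<Longrightarrow> eact K c a d \<in> ext K C' A'"
  using ET1 unfolding ET1_def by (elim conjE) blast

lemma eact_eadd:
  "c \<in> Hom K C' C \<Longrightarrow> a \<in> Hom K A A' \<Longrightarrow> d \<in> ext K C A \<Longrightarrow> d' \<in> ext K C A \<Longrightarrow>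
    eact K c a (eadd K d d') = eadd K (eact K c a d) (eact K c a d')"
  using ET1 unfolding ET1_def by (elim conjE) blast

lemma eact_idm:
  "C \<in> ob K \<Longrightarrow> A \<in> ob K \<Longrightarrow> d \<in> ext K C A \<Longrightarrow> eact K (idm K C) (idm K A) d = d"
  using ET1 unfolding ET1_def by (elim conjE) blast

lemma eact_cmp:
  "c \<in> Hom K C' C \<Longrightarrow> c' \<in> Hom K C'' C' \<Longrightarrow> a \<in> Hom K A A' \<Longrightarrow> a' \<in> Hom K A' A'' \<Longrightarrow>
    d \<in> ext K C A \<Longrightarrow> eact K (cmp K c c') (cmp K a' a) d = eact K c' a' (eact K c a d)"
  using ET1 by (simp add: ET1_def)

lemma eact_madd_left:
  "c1 \<in> Hom K C' C \<Longrightarrow> c2 \<in> Hom K C' C \<Longrightarrow> a \<in> Hom K A A' \<Longrightarrow> d \<in> ext K C A \<Longrightarrow>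
    eact K (madd K c1 c2) a d = eadd K (eact K c1 a d) (eact K c2 a d)"
  using ET1 by (simp add: ET1_def)

lemma rlz_Hom: "rlz K C A d x y \<Longrightarrow> \<exists>B\<in>ob K. x \<in> Hom K A B \<and> y \<in> Hom K B C"
  using ET2 unfolding ET2_def by (elim conjE) blast

lemma rlz_ob_ext: "rlz K C A d x y \<Longrightarrow> C \<in> ob K \<and> A \<in> ob K \<and> d \<in> ext K C A"
  using ET2 unfolding ET2_def by (elim conjE) blast

lemma rlz_ex: "C \<in> ob K \<Longrightarrow> A \<in> ob K \<Longrightarrow> d \<in> ext K C A \<Longrightarrow> \<exists>x y. rlz K C A d x y"
  using ET2 unfolding ET2_def by (elim conjE) blast

lemma rlz_morphism:
  assumes "rlz K C A d x y" "rlz K C' A' d' x' y'"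
    and "x \<in> Hom K A B" "y \<in> Hom K B C" "x' \<in> Hom K A' B'" "y' \<in> Hom K B' C'"
    and "a \<in> Hom K A A'" "c \<in> Hom K C C'" "ext_push K C a d = ext_pull K A' c d'"
  shows "\<exists>b\<in>Hom K B B'. cmp K b x = cmp K x' a \<and> cmp K y' b = cmp K c y"
  using ET2 assms by (simp add: ET2_def)

lemma rlz_biprod:
  "C \<in> ob K \<Longrightarrow> A \<in> ob K \<Longrightarrow> is_biprod K A C S i1 i2 p1 p2 \<Longrightarrow> rlz K C A (ezero K C A) i1 p2"
  using ET2 by (simp add: ET2_def)

lemma ET3_complete:
  assumes "rlz K C A d x y" "rlz K C' A' d' x' y'"
    and "x \<in> Hom K A B" "y \<in> Hom K B C" "x' \<in> Hom K A' B'" "y' \<in> Hom K B' C'"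
    and "a \<in> Hom K A A'" "b \<in> Hom K B B'" "cmp K b x = cmp K x' a"
  shows "\<exists>c\<in>Hom K C C'. cmp K c y = cmp K y' b \<and> ext_push K C a d = ext_pull K A' c d'"
  using ET3 assms unfolding ET3_def by blast

lemma mzero_Hom:
  assumes "X \<in> ob K" "Y \<in> ob K" shows "mzero K X Y \<in> Hom K X Y"
proof -
  interpret comm_group "homgrp K X Y" using comm_group_homgrp[OF assms] .
  show ?thesis using one_closed by (simp add: homgrp_def)
qed

lemma cmp_mzero_left:
  assumes Z: "Z \<in> ob K" and f: "f \<in> Hom K X Y"
  shows "cmp K (mzero K Y Z) f = mzero K X Z"
proof -
  have X: "X \<in> ob K" and Y: "Y \<in> ob K" using Hom_ob[OF f] by auto
  interpret XZ: comm_group "homgrp K X Z" using comm_group_homgrp[OF X Z] .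
  interpret YZ: comm_group "homgrp K Y Z" using comm_group_homgrp[OF Y Z] .
  let ?u = "cmp K (mzero K Y Z) f"
  have zero: "mzero K Y Z \<in> Hom K Y Z" using mzero_Hom[OF Y Z] .
  have u: "?u \<in> Hom K X Z" using cmp_Hom[OF f zero] .
  have "madd K ?u ?u = cmp K (madd K (mzero K Y Z) (mzero K Y Z)) f"
    using cmp_madd_left[OF f zero zero] by simp
  also have "\<dots> = ?u"
    using YZ.l_one[of "mzero K Y Z"] zero by (simp add: homgrp_def)
  finally show ?thesis
    using XZ.l_cancel_one[of ?u ?u] u by (simp add: homgrp_def)
qed

lemma cmp_left_hom: "g \<in> Hom K Y Z \<Longrightarrow> cmp K g \<in> hom (homgrp K A Y) (homgrp K A Z)"
  by (rule homI) (simp_all add: homgrp_def cmp_Hom cmp_madd_right)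

lemma cmp_right_hom: "f \<in> Hom K X Y \<Longrightarrow> (\<lambda>e. cmp K e f) \<in> hom (homgrp K Y Z) (homgrp K X Z)"
  by (rule homI) (simp_all add: homgrp_def cmp_Hom cmp_madd_left)

lemma eact_hom:
  "c \<in> Hom K C' C \<Longrightarrow> a \<in> Hom K A A' \<Longrightarrow> eact K c a \<in> hom (extgrp K C A) (extgrp K C' A')"
  by (rule homI) (simp_all add: extgrp_def eact_ext eact_eadd)

lemma ext_push_hom:
  "C \<in> ob K \<Longrightarrow> a \<in> Hom K A A' \<Longrightarrow> ext_push K C a \<in> hom (extgrp K C A) (extgrp K C A')"
  unfolding ext_push_def by (intro eact_hom idm_Hom)

lemma ext_pull_hom:
  "A \<in> ob K \<Longrightarrow> c \<in> Hom K C' C \<Longrightarrow> ext_pull K A c \<in> hom (extgrp K C A) (extgrp K C' A)"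
  unfolding ext_pull_def by (intro eact_hom idm_Hom)

lemma pull_back_hom:
  assumes A: "A \<in> ob K" and d: "d \<in> ext K C A"
  shows "(\<lambda>u. ext_pull K A u d) \<in> hom (homgrp K B C) (extgrp K B A)"
  using eact_ext[OF _ idm_Hom[OF A] d] eact_madd_left[OF _ _ idm_Hom[OF A] d]
  by (intro homI) (simp_all add: homgrp_def extgrp_def ext_pull_def)

lemma ext_push_idm: "C \<in> ob K \<Longrightarrow> A \<in> ob K \<Longrightarrow> d \<in> ext K C A \<Longrightarrow> ext_push K C (idm K A) d = d"
  by (simp add: ext_push_def eact_idm)

lemma ext_pull_ext_pull:
  assumes "c \<in> Hom K C' C" "c' \<in> Hom K C'' C'" "A \<in> ob K" "d \<in> ext K C A"
  shows "ext_pull K A c' (ext_pull K A c d) = ext_pull K A (cmp K c c') d"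
  using eact_cmp[OF assms(1,2) idm_Hom idm_Hom assms(4)] cmp_idm_left[OF idm_Hom] assms(3)
  by (simp add: ext_pull_def)

lemma ext_push_ext_pull:
  assumes c: "c \<in> Hom K C' C" and a: "a \<in> Hom K A A'" and d: "d \<in> ext K C A"
  shows "ext_push K C' a (ext_pull K A c d) = ext_pull K A' c (ext_push K C a d)"
proof -
  have ob: "C' \<in> ob K" "C \<in> ob K" "A \<in> ob K" "A' \<in> ob K" using Hom_ob c a by auto
  have "ext_push K C' a (ext_pull K A c d) = eact K (cmp K c (idm K C')) (cmp K a (idm K A)) d"
    using eact_cmp[OF c idm_Hom idm_Hom a d] ob by (simp add: ext_push_def ext_pull_def)
  also have "\<dots> = eact K (cmp K (idm K C) c) (cmp K (idm K A') a) d"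
    using c a by (simp add: cmp_idm_left cmp_idm_right)
  also have "\<dots> = ext_pull K A' c (ext_push K C a d)"
    using eact_cmp[OF idm_Hom c a idm_Hom d] ob by (simp add: ext_push_def ext_pull_def)
  finally show ?thesis .
qed

lemma ezero_ext:
  assumes "C \<in> ob K" "A \<in> ob K" shows "ezero K C A \<in> ext K C A"
proof -
  interpret comm_group "extgrp K C A" using comm_group_extgrp[OF assms] .
  show ?thesis using one_closed by (simp add: extgrp_def)
qed

lemma mzero_if_ext_pull_eq_ezero:
  assumes r: "rlz K S X \<delta> (mzero K X Z) (mzero K Z S)" and Z: "Z \<in> ob K"
    and c: "c \<in> Hom K B S" and c_\<delta>: "ext_pull K X c \<delta> = ezero K B X"
  shows "c = mzero K B S"
proof -
  have S: "S \<in> ob K" and X: "X \<in> ob K" using rlz_ob_ext[OF r] by auto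
  have B: "B \<in> ob K" using Hom_ob[OF c] by simp
  obtain P i1 i2 p1 p2 where bp: "is_biprod K X B P i1 i2 p1 p2" using biprod_ex[OF X B] by blast
  then have i1: "i1 \<in> Hom K X P" and i2: "i2 \<in> Hom K B P" and p2: "p2 \<in> Hom K P B"
    and p2_i2: "cmp K p2 i2 = idm K B"
    by (simp_all add: is_biprod_def)
  have split: "rlz K B X (ezero K B X) i1 p2" using rlz_biprod[OF B X bp] .
  have "ext_push K B (idm K X) (ezero K B X) = ext_pull K X c \<delta>"
    using c_\<delta> ext_push_idm[OF B X ezero_ext[OF B X]] by simp
  then obtain b where "b \<in> Hom K P Z" and b: "cmp K (mzero K Z S) b = cmp K c p2"
    using rlz_morphism[OF split r i1 p2 mzero_Hom[OF X Z] mzero_Hom[OF Z S] idm_Hom[OF X] c]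
    by blast
  then have c_p2: "cmp K c p2 = mzero K P S" using cmp_mzero_left[OF S] by simp
  have "c = cmp K (cmp K c p2) i2"
    using cmp_assoc[OF i2 p2 c] p2_i2 cmp_idm_right[OF c] by simp
  also have "\<dots> = mzero K B S" using c_p2 cmp_mzero_left[OF S i2] by simp
  finally show ?thesis .
qed

lemma ext_pull_surj:
  assumes r: "rlz K S X \<delta> (mzero K X Z) (mzero K Z S)" and Z: "Z \<in> ob K"
    and B: "B \<in> ob K" and d: "d \<in> ext K B X"
  shows "\<exists>c\<in>Hom K B S. d = ext_pull K X c \<delta>"
proof -
  have S: "S \<in> ob K" and X: "X \<in> ob K" using rlz_ob_ext[OF r] by auto
  obtain x y where rd: "rlz K B X d x y" using rlz_ex[OF B X d] by blast
  then obtain E where E: "E \<in> ob K" and x: "x \<in> Hom K X E" and y: "y \<in> Hom K E B"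
    using rlz_Hom by blast
  have "cmp K (mzero K E Z) x = cmp K (mzero K X Z) (idm K X)"
    using cmp_mzero_left[OF Z x] cmp_idm_right[OF mzero_Hom[OF X Z]] by simp
  then obtain c where "c \<in> Hom K B S" "ext_push K B (idm K X) d = ext_pull K X c \<delta>"
    using ET3_complete[OF rd r x y mzero_Hom[OF X Z] mzero_Hom[OF Z S] idm_Hom[OF X]
        mzero_Hom[OF E Z]]
    by blast
  then show ?thesis using ext_push_idm[OF B X d] by auto
qed

lemma ext_pull_iso:
  assumes r: "rlz K S X \<delta> (mzero K X Z) (mzero K Z S)" and Z: "Z \<in> ob K" and B: "B \<in> ob K"
  shows "(\<lambda>u. ext_pull K X u \<delta>) \<in> iso (homgrp K B S) (extgrp K B X)"
proof -
  have S: "S \<in> ob K" and X: "X \<in> ob K" and \<delta>: "\<delta> \<in> ext K S X" using rlz_ob_ext[OF r] by auto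
  interpret group_hom "homgrp K B S" "extgrp K B X" "\<lambda>u. ext_pull K X u \<delta>"
    using comm_group_homgrp[OF B S] comm_group_extgrp[OF B X] pull_back_hom[OF X \<delta>]
    by (simp add: group_hom_def group_hom_axioms_def comm_group_def)
  show ?thesis unfolding iso_iff
    using ext_pull_surj[OF r Z B] mzero_if_ext_pull_eq_ezero[OF r Z]
    by (auto simp: homgrp_def extgrp_def)
qed

end

locale extriangulated_category_with_suspension = extriangulated_category K
  for K :: "('o, 'm, 'e) extri" +
  fixes Sig :: "'o \<Rightarrow> 'o" and dl :: "'o \<Rightarrow> 'e"
  assumes suspension: "\<forall>Z\<in>ob K. Sig Z \<in> ob K \<and> dl Z \<in> ext K (Sig Z) Z \<and>
    (\<exists>Z0. zero_obj K Z0 \<and> rlz K (Sig Z) Z (dl Z) (mzero K Z Z0) (mzero K Z0 (Sig Z)))"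
begin

lemma Sig_ob: "Z \<in> ob K \<Longrightarrow> Sig Z \<in> ob K"
  using suspension by blast

lemma dl_ext: "Z \<in> ob K \<Longrightarrow> dl Z \<in> ext K (Sig Z) Z"
  using suspension by blast

lemma ext_pull_dl_iso:
  assumes "B \<in> ob K" "Z \<in> ob K"
  shows "(\<lambda>u. ext_pull K Z u (dl Z)) \<in> iso (homgrp K B (Sig Z)) (extgrp K B Z)"
proof -
  obtain Z0 where "zero_obj K Z0" "rlz K (Sig Z) Z (dl Z) (mzero K Z Z0) (mzero K Z0 (Sig Z))"
    using suspension assms(2) by blast
  then show ?thesis using ext_pull_iso assms(1) by (simp add: zero_obj_def)
qed

lemma Sigma_mor:
  assumes f: "f \<in> Hom K X Y"
  shows Sigma_mor_Hom: "Sigma_mor K Sig dl f \<in> Hom K (Sig X) (Sig Y)"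
    and ext_push_dl: "ext_push K (Sig X) f (dl X) = ext_pull K Y (Sigma_mor K Sig dl f) (dl Y)"
proof -
  have X: "X \<in> ob K" and Y: "Y \<in> ob K" using Hom_ob[OF f] by auto
  have "bij_betw (\<lambda>u. ext_pull K Y u (dl Y)) (Hom K (Sig X) (Sig Y)) (ext K (Sig X) Y)"
    using ext_pull_dl_iso[OF Sig_ob[OF X] Y] by (simp add: iso_def homgrp_def extgrp_def)
  moreover have "ext_push K (Sig X) f (dl X) \<in> ext K (Sig X) Y"
    using ext_push_hom[OF Sig_ob[OF X] f] dl_ext[OF X] by (auto simp: hom_def extgrp_def)
  ultimately have "\<exists>!g. g \<in> Hom K (Sig X) (Sig Y) \<and>
      ext_push K (Sig X) f (dl X) = ext_pull K Y g (dl Y)"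
    by (auto simp: bij_betw_def inj_on_def)
  moreover have "src K f = X" "tgt K f = Y" using f by (simp_all add: Hom_def)
  ultimately have "Sigma_mor K Sig dl f \<in> Hom K (Sig X) (Sig Y) \<and>
      ext_push K (Sig X) f (dl X) = ext_pull K Y (Sigma_mor K Sig dl f) (dl Y)"
    unfolding Sigma_mor_def by (simp only:) (rule theI')
  then show "Sigma_mor K Sig dl f \<in> Hom K (Sig X) (Sig Y)"
    and "ext_push K (Sig X) f (dl X) = ext_pull K Y (Sigma_mor K Sig dl f) (dl Y)"
    by auto
qed

lemma ext_push_ext_pull_dl:
  assumes f: "f \<in> Hom K X Y" and u: "u \<in> Hom K B (Sig X)"
  shows "ext_push K B f (ext_pull K X u (dl X)) = ext_pull K Y (cmp K (Sigma_mor K Sig dl f) u) (dl Y)"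
proof -
  have X: "X \<in> ob K" and Y: "Y \<in> ob K" using Hom_ob[OF f] by auto
  have "ext_push K B f (ext_pull K X u (dl X)) = ext_pull K Y u (ext_push K (Sig X) f (dl X))"
    using ext_push_ext_pull[OF u f dl_ext[OF X]] .
  also have "\<dots> = ext_pull K Y u (ext_pull K Y (Sigma_mor K Sig dl f) (dl Y))"
    using ext_push_dl[OF f] by simp
  also have "\<dots> = ext_pull K Y (cmp K (Sigma_mor K Sig dl f) u) (dl Y)"
    using ext_pull_ext_pull[OF Sigma_mor_Hom[OF f] u Y dl_ext[OF Y]] .
  finally show ?thesis .
qed

end

theorem lemma3p10:
  fixes K :: "('o, 'm, 'e) extri"
    and Sig :: "'o \<Rightarrow> 'o" and dl :: "'o \<Rightarrow> 'e"
    and A X Y :: 'o and f :: 'm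
  assumes "extriangulated K"
    and "\<forall>C\<in>ob K. \<forall>Z. zero_obj K Z \<longrightarrow>
           is_inflation K (mzero K C Z) \<and> is_deflation K (mzero K Z C)"
    and "\<forall>Z\<in>ob K. Sig Z \<in> ob K \<and> dl Z \<in> ext K (Sig Z) Z \<and>
           (\<exists>Z0. zero_obj K Z0 \<and> rlz K (Sig Z) Z (dl Z) (mzero K Z Z0) (mzero K Z0 (Sig Z)))"
    and "A \<in> ob K"
    and "f \<in> Hom K X Y"
  shows "morab_iso (homgrp K A (Sig X)) (homgrp K A (Sig Y)) (\<lambda>e. cmp K (Sigma_mor K Sig dl f) e)
                   (extgrp K A X) (extgrp K A Y) (\<lambda>d. ext_push K A f d)
       \<and> morab_iso (homgrp K Y (Sig A)) (homgrp K X (Sig A)) (\<lambda>e. cmp K e f)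
                   (extgrp K Y A) (extgrp K X A) (\<lambda>d. ext_pull K A f d)"
proof -
  \<comment> \<open>The second hypothesis is unused: it is what makes \<Sigma> exist, and \<Sigma> is supplied by the third.\<close>
  interpret extriangulated_category_with_suspension K Sig dl
    using assms(1,3) by unfold_locales
  note A = assms(4) and f = assms(5)
  have X: "X \<in> ob K" and Y: "Y \<in> ob K" using Hom_ob[OF f] by auto
  have "morab_iso (homgrp K A (Sig X)) (homgrp K A (Sig Y)) (cmp K (Sigma_mor K Sig dl f))
      (extgrp K A X) (extgrp K A Y) (ext_push K A f)"
    by (rule morab_isoI[OF cmp_left_hom[OF Sigma_mor_Hom[OF f]] ext_push_hom[OF A f]
          ext_pull_dl_iso[OF A X] ext_pull_dl_iso[OF A Y]])
      (simp add: homgrp_def ext_push_ext_pull_dl[OF f])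
  moreover have "morab_iso (homgrp K Y (Sig A)) (homgrp K X (Sig A)) (\<lambda>e. cmp K e f)
      (extgrp K Y A) (extgrp K X A) (ext_pull K A f)"
    by (rule morab_isoI[OF cmp_right_hom[OF f] ext_pull_hom[OF A f]
          ext_pull_dl_iso[OF Y A] ext_pull_dl_iso[OF X A]])
      (simp add: homgrp_def ext_pull_ext_pull[OF _ f A dl_ext[OF A]])
  ultimately show ?thesis by simp
qed

end
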